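(* Let $\mathcal{T}$ be a countable directed poset, $X:\mathcal{T}\to\mathbf{Set}_*$ a diagram of pointed sets satisfying the Mittag-Leffler condition, and $A$ an abelian group. Then: (1) If $A$ is $p$-divisible for a prime $p$, then $G(X,A)$ and $H(X,A)$ are $p$-divisible. (2) If $A$ is divisible, then $G(X,A)$ and $H(X,A)$ are divisible. (3) If $A$ is almost divisible, then $G(X,A)$ and $H(X,A)$ are almost divisible.
   Context: A directed poset is regarded as a category with a single morphism $t\to s$ whenever $t\ge s$. For a pointed set $Y$, $Y\wedge A:=\bigoplus_{Y\setminus\{*\}}A$ (finitely supported pointed maps $Y\to A$), functorial via $f_*(sv)=f(s)v$, where $sv$ is the element with value $v$ at $s$ ($*v=0$). $G(X,A):=\lim_\mathcal{T}(X\wedge A)$; $K(X,A)$ is the image of the injective natural map $\rho:(\lim_\mathcal{T}X)\wedge A\to G(X,A)$, $\rho(xv)(t)=x(t)v$; $H(X,A):=G(X,A)/K(X,A)$. $X$ satisfies the Mittag-Leffler condition if for every $t$ there is $s\ge t$ with $\mathrm{Im}(X(s)\to X(t))=\mathrm{Im}(X(r)\to X(t))$ for all $r\ge s$. An abelian group is almost divisible iff it is the direct sum of a divisible group and a bounded group (equivalently, $l_p(A)=0$ for almost all primes $p$ and $l_p(A)<\omega$ for all primes $p$, where $l_p$ is the $p$-length). *)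

theory Defs
  imports "HOL-Algebra.Algebra" "HOL-Computational_Algebra.Primes"
begin

definition n_divisible :: "('g, 'b) monoid_scheme \<Rightarrow> nat \<Rightarrow> bool" where
  "n_divisible G n \<longleftrightarrow> (\<forall>x\<in>carrier G. \<exists>y\<in>carrier G. y [^]\<^bsub>G\<^esub> n = x)"

definition divisible_grp :: "('g, 'b) monoid_scheme \<Rightarrow> bool" where
  "divisible_grp G \<longleftrightarrow> (\<forall>n::nat. n > 0 \<longrightarrow> n_divisible G n)"

definition bounded_grp :: "('g, 'b) monoid_scheme \<Rightarrow> bool" where
  "bounded_grp G \<longleftrightarrow> (\<exists>n::nat. n > 0 \<and> (\<forall>x\<in>carrier G. x [^]\<^bsub>G\<^esub> n = \<one>\<^bsub>G\<^esub>))"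

definition almost_divisible :: "('g, 'b) monoid_scheme \<Rightarrow> bool" where
  "almost_divisible G \<longleftrightarrow>
     (\<exists>D B. subgroup D G \<and> subgroup B G \<and>
        divisible_grp (G\<lparr>carrier := D\<rparr>) \<and> bounded_grp (G\<lparr>carrier := B\<rparr>) \<and>
        D \<inter> B = {\<one>\<^bsub>G\<^esub>} \<and> D <#>\<^bsub>G\<^esub> B = carrier G)"

text \<open>Elements of Y \<and> A (Y pointed with base point y0): finitely supported maps
  Y \<rightarrow> A, vanishing at y0 and outside Y.\<close>
definition wedge :: "('a, 'c) monoid_scheme \<Rightarrow> 'y set \<Rightarrow> 'y \<Rightarrow> ('y \<Rightarrow> 'a) set" where
  "wedge A Y y0 = {u. (\<forall>y. u y \<in> carrier A) \<and> (\<forall>y. (y \<notin> Y \<or> y = y0) \<longrightarrow> u y = \<one>\<^bsub>A\<^esub>)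
                      \<and> finite {y. u y \<noteq> \<one>\<^bsub>A\<^esub>}}"

text \<open>Induced map f_*: Y \<and> A \<rightarrow> Z \<and> A, f_*(s v) = f(s) v, extended additively.\<close>
definition push :: "('a, 'c) monoid_scheme \<Rightarrow> 'y set \<Rightarrow> 'y \<Rightarrow> 'z set \<Rightarrow> 'z \<Rightarrow> ('y \<Rightarrow> 'z)
                     \<Rightarrow> ('y \<Rightarrow> 'a) \<Rightarrow> ('z \<Rightarrow> 'a)" where
  "push A Y y0 Z z0 f u = (\<lambda>z. if z \<in> Z \<and> z \<noteq> z0
       then finprod A u {y. y \<in> Y \<and> y \<noteq> y0 \<and> f y = z \<and> u y \<noteq> \<one>\<^bsub>A\<^esub>}
       else \<one>\<^bsub>A\<^esub>)"

text \<open>The poset is the type 't with its order; the morphism t \<rightarrow> s exists iff s \<le> t.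
  X t is the pointed set at t with base point bp t; F t s : X t \<rightarrow> X s for s \<le> t.\<close>
definition pointed_diagram :: "('t::order \<Rightarrow> 'x set) \<Rightarrow> ('t \<Rightarrow> 'x) \<Rightarrow> ('t \<Rightarrow> 't \<Rightarrow> 'x \<Rightarrow> 'x) \<Rightarrow> bool" where
  "pointed_diagram D bp F \<longleftrightarrow>
     (\<forall>t. bp t \<in> D t) \<and>
     (\<forall>t s. s \<le> t \<longrightarrow> F t s ` D t \<subseteq> D s \<and> F t s (bp t) = bp s) \<and>
     (\<forall>t. \<forall>x\<in>D t. F t t x = x) \<and>
     (\<forall>t s r. r \<le> s \<and> s \<le> t \<longrightarrow> (\<forall>x\<in>D t. F s r (F t s x) = F t r x))"

definition directed_poset :: "'t::order itself \<Rightarrow> bool" where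
  "directed_poset _ \<longleftrightarrow> (\<forall>s t::'t. \<exists>u. s \<le> u \<and> t \<le> u)"

definition mittag_leffler :: "('t::order \<Rightarrow> 'x set) \<Rightarrow> ('t \<Rightarrow> 't \<Rightarrow> 'x \<Rightarrow> 'x) \<Rightarrow> bool" where
  "mittag_leffler D F \<longleftrightarrow>
     (\<forall>t. \<exists>s. t \<le> s \<and> (\<forall>r. s \<le> r \<longrightarrow> F s t ` D s = F r t ` D r))"

definition limX :: "('t::order \<Rightarrow> 'x set) \<Rightarrow> ('t \<Rightarrow> 't \<Rightarrow> 'x \<Rightarrow> 'x) \<Rightarrow> ('t \<Rightarrow> 'x) set" where
  "limX D F = {x. (\<forall>t. x t \<in> D t) \<and> (\<forall>t s. s \<le> t \<longrightarrow> F t s (x t) = x s)}"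

definition G_carrier :: "('t::order \<Rightarrow> 'x set) \<Rightarrow> ('t \<Rightarrow> 'x) \<Rightarrow> ('t \<Rightarrow> 't \<Rightarrow> 'x \<Rightarrow> 'x)
                          \<Rightarrow> ('a, 'c) monoid_scheme \<Rightarrow> ('t \<Rightarrow> 'x \<Rightarrow> 'a) set" where
  "G_carrier D bp F A = {g. (\<forall>t. g t \<in> wedge A (D t) (bp t)) \<and>
      (\<forall>t s. s \<le> t \<longrightarrow> push A (D t) (bp t) (D s) (bp s) (F t s) (g t) = g s)}"

definition G_grp :: "('t::order \<Rightarrow> 'x set) \<Rightarrow> ('t \<Rightarrow> 'x) \<Rightarrow> ('t \<Rightarrow> 't \<Rightarrow> 'x \<Rightarrow> 'x)
                      \<Rightarrow> ('a, 'c) monoid_scheme \<Rightarrow> ('t \<Rightarrow> 'x \<Rightarrow> 'a) monoid" where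
  "G_grp D bp F A = \<lparr>carrier = G_carrier D bp F A,
      Group.monoid.mult = (\<lambda>g h t x. g t x \<otimes>\<^bsub>A\<^esub> h t x),
      one = (\<lambda>t x. \<one>\<^bsub>A\<^esub>)\<rparr>"

text \<open>rho : (lim X) \<and> A \<rightarrow> G(X,A), rho(x v)(t) = x(t) v, i.e. rho(u)(t) = (ev_t)_*(u).\<close>
definition rho :: "('t::order \<Rightarrow> 'x set) \<Rightarrow> ('t \<Rightarrow> 'x) \<Rightarrow> ('t \<Rightarrow> 't \<Rightarrow> 'x \<Rightarrow> 'x)
                   \<Rightarrow> ('a, 'c) monoid_scheme \<Rightarrow> (('t \<Rightarrow> 'x) \<Rightarrow> 'a) \<Rightarrow> ('t \<Rightarrow> 'x \<Rightarrow> 'a)" where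
  "rho D bp F A u = (\<lambda>t. push A (limX D F) bp (D t) (bp t) (\<lambda>x. x t) u)"

definition K_set :: "('t::order \<Rightarrow> 'x set) \<Rightarrow> ('t \<Rightarrow> 'x) \<Rightarrow> ('t \<Rightarrow> 't \<Rightarrow> 'x \<Rightarrow> 'x)
                     \<Rightarrow> ('a, 'c) monoid_scheme \<Rightarrow> ('t \<Rightarrow> 'x \<Rightarrow> 'a) set" where
  "K_set D bp F A = rho D bp F A ` wedge A (limX D F) bp"

definition H_grp :: "('t::order \<Rightarrow> 'x set) \<Rightarrow> ('t \<Rightarrow> 'x) \<Rightarrow> ('t \<Rightarrow> 't \<Rightarrow> 'x \<Rightarrow> 'x)
                      \<Rightarrow> ('a, 'c) monoid_scheme \<Rightarrow> ('t \<Rightarrow> 'x \<Rightarrow> 'a) set monoid" where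
  "H_grp D bp F A = G_grp D bp F A Mod K_set D bp F A"

end

theory Submission
  imports Defs
begin

text \<open>
  For each \<open>n\<close>, \<open>n\<close>-divisibility has to be lifted from \<open>A\<close> to \<open>G(X,A)\<close>; the quotient
  \<open>H = G/K\<close> then inherits it. An element \<open>g\<close> of \<open>G(X,A)\<close> is a compatible family of
  finitely supported maps, and \<open>g(t)\<close> is supported in the stable image
  \<open>I(t) = \<Inter>{F t s (X s) | s. t \<le> s}\<close>; by Mittag-Leffler and directedness the transition
  maps restrict to surjections \<open>I(t') \<rightarrow> I(t)\<close>. Countability gives a cofinal chain
  \<open>t\<^sub>0 \<le> t\<^sub>1 \<le> \<dots>\<close>. Given an \<open>n\<close>-th root \<open>h\<close> of \<open>g(t\<^sub>k)\<close> supported in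
  \<open>I(t\<^sub>k)\<close>, take any \<open>n\<close>-th root \<open>r\<close> of \<open>g(t\<^sub>k\<^sub>+\<^sub>1)\<close>: the quotient of \<open>h\<close> by the
  push-forward of \<open>r\<close> is \<open>n\<close>-torsion and supported in \<open>I(t\<^sub>k)\<close>, so it lifts to a torsion
  correction of \<open>r\<close> that pushes forward to \<open>h\<close>. The compatible sequence of roots obtained
  this way is an \<open>n\<close>-th root of \<open>g\<close>.

  If \<open>A = U \<oplus> V\<close> with \<open>U\<close> divisible and \<open>V\<close> bounded, then \<open>G(X,A) = G(X,U) \<oplus> G(X,V)\<close>
  pointwise, and \<open>G(X,U)\<close> is divisible by the above. The projection onto \<open>V\<close> acts pointwise
  and maps \<open>K\<close> into itself, so \<open>K = (K \<inter> G(X,U)) (K \<inter> G(X,V))\<close> and the splitting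
  descends to \<open>H\<close>.
\<close>

section \<open>Divisibility, quotients and internal direct sums\<close>

lemma (in group) hom_one_self: "\<phi> \<in> hom G G \<Longrightarrow> \<phi> \<one> = \<one>"
  using hom_one is_group by blast

lemma (in comm_group) inv_hom: "(\<lambda>a. inv a) \<in> hom G G"
  by (rule homI) (simp_all add: inv_mult)

lemma (in comm_group) subgroup_is_comm_group: "subgroup H G \<Longrightarrow> comm_group (G\<lparr>carrier := H\<rparr>)"
  using submonoid_is_comm_monoid[OF subgroup_is_submonoid] subgroup.subgroup_is_group is_group
  unfolding comm_group_def by blast

lemma (in comm_monoid) nat_pow_hom: "(\<lambda>a. a [^] (n::nat)) \<in> hom G G"
  by (rule homI) (simp_all add: nat_pow_distrib)

lemma (in monoid) n_divisible_carrier_update: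
  "n_divisible (G\<lparr>carrier := H\<rparr>) n \<longleftrightarrow> (\<forall>x\<in>H. \<exists>y\<in>H. y [^] n = x)"
  unfolding n_divisible_def by (simp add: nat_pow_consistent[symmetric])

lemma (in monoid) bounded_grp_carrier_update:
  "bounded_grp (G\<lparr>carrier := H\<rparr>) \<longleftrightarrow> (\<exists>n::nat. n > 0 \<and> (\<forall>x\<in>H. x [^] n = \<one>))"
  unfolding bounded_grp_def by (simp add: nat_pow_consistent[symmetric])

context group_hom
begin

lemma n_divisible_image:
  assumes "S \<subseteq> carrier G" and "n_divisible (G\<lparr>carrier := S\<rparr>) n"
  shows "n_divisible (H\<lparr>carrier := h ` S\<rparr>) n"
  using assms unfolding G.n_divisible_carrier_update H.n_divisible_carrier_update
  by (force simp: hom_nat_pow[symmetric])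

lemma bounded_grp_image:
  assumes "S \<subseteq> carrier G" and "bounded_grp (G\<lparr>carrier := S\<rparr>)"
  shows "bounded_grp (H\<lparr>carrier := h ` S\<rparr>)"
  using assms unfolding G.bounded_grp_carrier_update H.bounded_grp_carrier_update
  by (force simp: hom_nat_pow[symmetric])

lemma image_set_mult:
  assumes "S \<subseteq> carrier G" "T \<subseteq> carrier G"
  shows "h ` (S <#>\<^bsub>G\<^esub> T) = h ` S <#>\<^bsub>H\<^esub> h ` T"
  using assms unfolding set_mult_def by (force simp: subsetD)

end

lemma (in normal) n_divisible_FactGroup:
  assumes "n_divisible G n"
  shows "n_divisible (G Mod H) n"
proof -
  interpret \<pi>: group_hom G "G Mod H" "\<lambda>a. H #> a"
    by (intro group_hom.intro group_hom_axioms.intro is_group factorgroup_is_group r_coset_hom_Mod)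
  have "(G Mod H)\<lparr>carrier := (\<lambda>a. H #> a) ` carrier G\<rparr> = G Mod H"
    by (simp add: carrier_FactGroup[symmetric])
  then show ?thesis
    using \<pi>.n_divisible_image[of "carrier G"] assms by simp
qed

locale internal_direct_sum = comm_group G for G (structure) +
  fixes U V
  assumes U: "subgroup U G" and V: "subgroup V G"
    and inter: "U \<inter> V = {\<one>}" and sum: "U <#> V = carrier G"
begin

definition proj :: "'a \<Rightarrow> 'a" where
  "proj a = (THE v. v \<in> V \<and> a \<otimes> inv v \<in> U)"

lemma proj_unique:
  assumes a: "a \<in> carrier G" and v: "v \<in> V" "a \<otimes> inv v \<in> U" and v': "v' \<in> V" "a \<otimes> inv v' \<in> U"
  shows "v = v'"
proof -
  define u u' where "u = a \<otimes> inv v" and "u' = a \<otimes> inv v'"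
  have carr: "v \<in> carrier G" "v' \<in> carrier G" "u \<in> carrier G" "u' \<in> carrier G"
    using v v' subgroup.mem_carrier[OF U] subgroup.mem_carrier[OF V] unfolding u_def u'_def
    by simp_all
  have "u \<otimes> v = u' \<otimes> v'" using a carr by (simp add: u_def u'_def m_assoc)
  then have "v' = (inv u' \<otimes> u) \<otimes> v" using carr by (simp add: m_assoc inv_solve_left)
  then have "v' \<otimes> inv v = inv u' \<otimes> u" using carr by (simp add: inv_solve_right')
  moreover have "inv u' \<otimes> u \<in> U" "v' \<otimes> inv v \<in> V"
    using U V v v' unfolding u_def u'_def by (simp_all add: subgroup.m_closed subgroup.m_inv_closed)
  ultimately have "v' \<otimes> inv v = \<one>" using inter by auto
  then show ?thesis using carr by (simp add: inv_solve_right')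
qed

lemma proj:
  assumes "a \<in> carrier G"
  shows "proj a \<in> V" "a \<otimes> inv (proj a) \<in> U"
proof -
  obtain u v where uv: "u \<in> U" "v \<in> V" "a = u \<otimes> v"
    using assms sum unfolding set_mult_def by blast
  then have "a \<otimes> inv v = u"
    using subgroup.mem_carrier[OF U] subgroup.mem_carrier[OF V] by (simp add: inv_solve_right')
  then have v: "v \<in> V \<and> a \<otimes> inv v \<in> U" using uv by simp
  then have "proj a \<in> V \<and> a \<otimes> inv (proj a) \<in> U"
    unfolding proj_def by (rule theI) (use proj_unique[OF assms] v in blast)
  then show "proj a \<in> V" "a \<otimes> inv (proj a) \<in> U" by blast+
qed

lemma proj_hom: "proj \<in> hom G G"
proof (rule homI)
  fix a b assume ab: "a \<in> carrier G" "b \<in> carrier G"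
  have carr: "proj a \<in> carrier G" "proj b \<in> carrier G"
    using proj(1) ab subgroup.mem_carrier[OF V] by simp_all
  show "proj a \<in> carrier G" by (rule carr(1))
  have "a \<otimes> b \<otimes> inv (proj a \<otimes> proj b) = (a \<otimes> inv (proj a)) \<otimes> (b \<otimes> inv (proj b))"
    using ab carr by (simp add: inv_mult m_ac)
  then have "a \<otimes> b \<otimes> inv (proj a \<otimes> proj b) \<in> U"
    using U proj(2) ab by (simp add: subgroup.m_closed)
  moreover have "proj a \<otimes> proj b \<in> V" using V proj(1) ab by (simp add: subgroup.m_closed)
  ultimately show "proj (a \<otimes> b) = proj a \<otimes> proj b"
    using proj_unique proj[of "a \<otimes> b"] ab by blast
qed

lemma almost_divisibleI:
  "divisible_grp (G\<lparr>carrier := U\<rparr>) \<Longrightarrow> bounded_grp (G\<lparr>carrier := V\<rparr>) \<Longrightarrow> almost_divisible G"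
  unfolding almost_divisible_def using U V inter sum by blast

lemma FactGroup_images_inter:
  assumes K: "subgroup K G" and K_split: "K \<subseteq> (K \<inter> U) <#> (K \<inter> V)"
  shows "(\<lambda>a. K #> a) ` U \<inter> (\<lambda>a. K #> a) ` V = {\<one>\<^bsub>G Mod K\<^esub>}"
proof
  have UV_carr: "U \<subseteq> carrier G" "V \<subseteq> carrier G" using subgroup.subset[OF U] subgroup.subset[OF V] .
  show "(\<lambda>a. K #> a) ` U \<inter> (\<lambda>a. K #> a) ` V \<subseteq> {\<one>\<^bsub>G Mod K\<^esub>}"
  proof
    fix Q assume "Q \<in> (\<lambda>a. K #> a) ` U \<inter> (\<lambda>a. K #> a) ` V"
    then obtain u v where u: "u \<in> U" and v: "v \<in> V" and Q: "Q = K #> u" "Q = K #> v" by blast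
    have "v \<in> K #> u" using Q rcos_self[OF _ K] v UV_carr by auto
    then obtain k where k: "k \<in> K" "v = k \<otimes> u" unfolding r_coset_def by blast
    then obtain ku kv where kuv: "ku \<in> K \<inter> U" "kv \<in> K \<inter> V" "k = ku \<otimes> kv"
      using K_split unfolding set_mult_def by blast
    have carr: "u \<in> carrier G" "v \<in> carrier G" "ku \<in> carrier G" "kv \<in> carrier G"
      using u v kuv UV_carr by blast+
    have "v = (ku \<otimes> u) \<otimes> kv" using k(2) kuv(3) carr by (simp add: m_ac)
    then have "v \<otimes> inv kv = ku \<otimes> u" using carr by (simp add: inv_solve_right')
    moreover have "v \<otimes> inv kv \<in> V" "ku \<otimes> u \<in> U"
      using V U v u kuv by (simp_all add: subgroup.m_closed subgroup.m_inv_closed)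
    ultimately have "v \<otimes> inv kv = \<one>" using inter by auto
    then have "v = kv" using carr by (simp add: inv_solve_right')
    then show "Q \<in> {\<one>\<^bsub>G Mod K\<^esub>}"
      using Q(2) kuv(2) subgroup.rcos_const[OF K is_group, of kv] by simp
  qed
  show "{\<one>\<^bsub>G Mod K\<^esub>} \<subseteq> (\<lambda>a. K #> a) ` U \<inter> (\<lambda>a. K #> a) ` V"
    using subgroup.one_closed[OF U] subgroup.one_closed[OF V] coset_mult_one[OF subgroup.subset[OF K]]
    by force
qed

lemma almost_divisible_FactGroup:
  assumes div: "divisible_grp (G\<lparr>carrier := U\<rparr>)" and bnd: "bounded_grp (G\<lparr>carrier := V\<rparr>)"
    and K: "subgroup K G" and K_split: "K \<subseteq> (K \<inter> U) <#> (K \<inter> V)"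
  shows "almost_divisible (G Mod K)"
proof -
  have "K \<lhd> G" by (rule subgroup_imp_normal[OF K])
  interpret \<pi>: group_hom G "G Mod K" "\<lambda>a. K #> a"
    by (intro group_hom.intro group_hom_axioms.intro is_group normal.factorgroup_is_group[OF \<open>K \<lhd> G\<close>]
        normal.r_coset_hom_Mod[OF \<open>K \<lhd> G\<close>])
  have UV_carr: "U \<subseteq> carrier G" "V \<subseteq> carrier G" using subgroup.subset[OF U] subgroup.subset[OF V] .
  have "(\<lambda>a. K #> a) ` U <#>\<^bsub>G Mod K\<^esub> (\<lambda>a. K #> a) ` V = carrier (G Mod K)"
    unfolding \<pi>.image_set_mult[OF UV_carr, symmetric] sum carrier_FactGroup ..
  moreover have "divisible_grp ((G Mod K)\<lparr>carrier := (\<lambda>a. K #> a) ` U\<rparr>)"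
    using div \<pi>.n_divisible_image[OF UV_carr(1)] unfolding divisible_grp_def by blast
  ultimately show ?thesis
    unfolding almost_divisible_def
    using \<pi>.subgroup_img_is_subgroup[OF U] \<pi>.subgroup_img_is_subgroup[OF V]
      \<pi>.bounded_grp_image[OF UV_carr(2) bnd] FactGroup_images_inter[OF K K_split] by blast
qed

end

section \<open>Push-forward of finitely supported maps\<close>

context comm_monoid
begin

lemma finprod_carrier_update:
  assumes H: "submonoid H G" and f: "f \<in> I \<rightarrow> H"
  shows "finprod (G\<lparr>carrier := H\<rparr>) f I = finprod G f I"
proof -
  interpret H: comm_monoid "G\<lparr>carrier := H\<rparr>" by (rule submonoid_is_comm_monoid[OF H])
  have "H \<subseteq> carrier G" using H submonoid.subset by blast
  with f show ?thesis
  proof (induct I rule: infinite_finite_induct)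
    case (insert a I)
    then show ?case by (simp add: Pi_iff subsetD H.finprod_insert del: Pi_I')
  qed simp_all
qed

lemma wedgeD:
  assumes "u \<in> wedge G Y y0"
  shows "u y \<in> carrier G" "y \<notin> Y \<Longrightarrow> u y = \<one>" "u y0 = \<one>"
    "finite {y. u y \<noteq> \<one>}" "{y. u y \<noteq> \<one>} \<subseteq> Y - {y0}"
  using assms unfolding wedge_def by auto

lemma wedgeI:
  assumes "\<And>y. u y \<in> carrier G" "\<And>y. y \<notin> Y - {y0} \<Longrightarrow> u y = \<one>" "finite {y. u y \<noteq> \<one>}"
  shows "u \<in> wedge G Y y0"
  using assms unfolding wedge_def by auto

lemma one_in_wedge: "(\<lambda>y. \<one>) \<in> wedge G Y y0"
  by (rule wedgeI) simp_all

lemma push_eq_finprod: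
  assumes u: "u \<in> wedge G Y y0" and S: "finite S" "{y. u y \<noteq> \<one>} \<subseteq> S"
  shows "push G Y y0 Z z0 f u z = (if z \<in> Z \<and> z \<noteq> z0 then finprod G u {y\<in>S. f y = z} else \<one>)"
proof -
  have "finprod G u {y. y \<in> Y \<and> y \<noteq> y0 \<and> f y = z \<and> u y \<noteq> \<one>} = finprod G u {y\<in>S. f y = z}"
    by (rule finprod_mono_neutral_cong_left) (use S wedgeD[OF u] in auto)
  then show ?thesis unfolding push_def by simp
qed

lemma push_support:
  assumes u: "u \<in> wedge G Y y0"
  shows "{z. push G Y y0 Z z0 f u z \<noteq> \<one>} \<subseteq> f ` {y. u y \<noteq> \<one>}"
proof
  fix z assume "z \<in> {z. push G Y y0 Z z0 f u z \<noteq> \<one>}"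
  then have "finprod G u {y\<in>{y. u y \<noteq> \<one>}. f y = z} \<noteq> \<one>"
    using push_eq_finprod[OF u wedgeD(4)[OF u] order_refl, of Z z0 f z] by (simp split: if_splits)
  then have "{y\<in>{y. u y \<noteq> \<one>}. f y = z} \<noteq> {}" by (metis finprod_empty)
  then show "z \<in> f ` {y. u y \<noteq> \<one>}" by auto
qed

lemma push_in_wedge:
  assumes u: "u \<in> wedge G Y y0"
  shows "push G Y y0 Z z0 f u \<in> wedge G Z z0"
proof (rule wedgeI)
  show "finite {z. push G Y y0 Z z0 f u z \<noteq> \<one>}"
    by (rule finite_surj[OF wedgeD(4)[OF u] push_support[OF u]])
  show "push G Y y0 Z z0 f u z \<in> carrier G" for z
    using wedgeD(1)[OF u] unfolding push_def by (simp add: Pi_iff)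
  show "push G Y y0 Z z0 f u z = \<one>" if "z \<notin> Z - {z0}" for z
    using that unfolding push_def by auto
qed

lemma push_one: "push G Y y0 Z z0 f (\<lambda>y. \<one>) = (\<lambda>z. \<one>)"
  unfolding push_def by (rule ext) (simp only: simp_thms finprod_one if_cancel)

lemma push_cong:
  assumes "\<And>y. y \<in> Y \<Longrightarrow> f y = f' y"
  shows "push G Y y0 Z z0 f u = push G Y y0 Z z0 f' u"
proof -
  have "{y. y \<in> Y \<and> y \<noteq> y0 \<and> f y = z \<and> u y \<noteq> \<one>} = {y. y \<in> Y \<and> y \<noteq> y0 \<and> f' y = z \<and> u y \<noteq> \<one>}" for z
    using assms by auto
  then show ?thesis unfolding push_def by (intro ext if_cong[OF refl _ refl]) simp
qed

lemma push_id:
  assumes u: "u \<in> wedge G Y y0"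
  shows "push G Y y0 Y y0 (\<lambda>y. y) u = u"
proof
  fix z
  have "{y \<in> {y. u y \<noteq> \<one>}. y = z} = (if u z = \<one> then {} else {z})" by auto
  then show "push G Y y0 Y y0 (\<lambda>y. y) u z = u z"
    using push_eq_finprod[OF u wedgeD(4)[OF u] order_refl, of Y y0 "\<lambda>y. y" z] wedgeD[OF u]
    by auto
qed

lemma push_mult:
  assumes u: "u \<in> wedge G Y y0" and v: "v \<in> wedge G Y y0"
  shows "(\<lambda>y. u y \<otimes> v y) \<in> wedge G Y y0"
    and "push G Y y0 Z z0 f (\<lambda>y. u y \<otimes> v y) = (\<lambda>z. push G Y y0 Z z0 f u z \<otimes> push G Y y0 Z z0 f v z)"
proof -
  let ?S = "{y. u y \<noteq> \<one>} \<union> {y. v y \<noteq> \<one>}"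
  have S: "finite ?S" "{y. u y \<otimes> v y \<noteq> \<one>} \<subseteq> ?S" using wedgeD(4)[OF u] wedgeD(4)[OF v] by auto
  show uv: "(\<lambda>y. u y \<otimes> v y) \<in> wedge G Y y0"
    using wedgeD[OF u] wedgeD[OF v] finite_subset[OF S(2,1)] by (intro wedgeI) auto
  show "push G Y y0 Z z0 f (\<lambda>y. u y \<otimes> v y) = (\<lambda>z. push G Y y0 Z z0 f u z \<otimes> push G Y y0 Z z0 f v z)"
  proof
    fix z
    have "u \<in> {y\<in>?S. f y = z} \<rightarrow> carrier G" "v \<in> {y\<in>?S. f y = z} \<rightarrow> carrier G"
      using wedgeD(1)[OF u] wedgeD(1)[OF v] by blast+
    then show "push G Y y0 Z z0 f (\<lambda>y. u y \<otimes> v y) z = push G Y y0 Z z0 f u z \<otimes> push G Y y0 Z z0 f v z"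
      unfolding push_eq_finprod[OF uv S] push_eq_finprod[OF u S(1) Un_upper1]
        push_eq_finprod[OF v S(1) Un_upper2]
      by (simp add: finprod_multf)
  qed
qed

lemma finprod_hom:
  assumes "\<phi> \<in> hom G G" "\<phi> \<one> = \<one>" "f \<in> I \<rightarrow> carrier G"
  shows "\<phi> (finprod G f I) = finprod G (\<lambda>i. \<phi> (f i)) I"
  using assms(3)
proof (induct I rule: infinite_finite_induct)
  case (insert a I)
  then show ?case using assms(1,2) by (simp add: hom_mult hom_in_carrier Pi_iff del: Pi_I')
qed (simp_all add: assms(2))

lemma push_hom:
  assumes u: "u \<in> wedge G Y y0" and \<phi>: "\<phi> \<in> hom G G" "\<phi> \<one> = \<one>"
  shows "(\<lambda>y. \<phi> (u y)) \<in> wedge G Y y0"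
    and "push G Y y0 Z z0 f (\<lambda>y. \<phi> (u y)) = (\<lambda>z. \<phi> (push G Y y0 Z z0 f u z))"
proof -
  have S: "{y. \<phi> (u y) \<noteq> \<one>} \<subseteq> {y. u y \<noteq> \<one>}" using \<phi>(2) by auto
  show w: "(\<lambda>y. \<phi> (u y)) \<in> wedge G Y y0"
    using wedgeD[OF u] finite_subset[OF S wedgeD(4)[OF u]] \<phi> by (intro wedgeI) (auto simp: hom_in_carrier)
  show "push G Y y0 Z z0 f (\<lambda>y. \<phi> (u y)) = (\<lambda>z. \<phi> (push G Y y0 Z z0 f u z))"
  proof
    fix z
    have "u \<in> {y \<in> {y. u y \<noteq> \<one>}. f y = z} \<rightarrow> carrier G" using wedgeD(1)[OF u] by blast
    then show "push G Y y0 Z z0 f (\<lambda>y. \<phi> (u y)) z = \<phi> (push G Y y0 Z z0 f u z)"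
      unfolding push_eq_finprod[OF w wedgeD(4)[OF u] S] push_eq_finprod[OF u wedgeD(4)[OF u] order_refl]
      by (simp add: finprod_hom[OF \<phi>] \<phi>(2))
  qed
qed

lemma push_comp:
  assumes u: "u \<in> wedge G Y y0" and f: "f ` Y \<subseteq> Z" "f y0 = z0" and g: "g z0 = w0"
  shows "push G Z z0 W w0 g (push G Y y0 Z z0 f u) = push G Y y0 W w0 (\<lambda>y. g (f y)) u"
proof
  fix w
  let ?S = "{y. u y \<noteq> \<one>}" and ?fu = "push G Y y0 Z z0 f u"
  have S: "finite ?S" using wedgeD(4)[OF u] .
  show "push G Z z0 W w0 g ?fu w = push G Y y0 W w0 (\<lambda>y. g (f y)) u w"
  proof (cases "w \<in> W \<and> w \<noteq> w0")
    case True
    let ?Zw = "{z \<in> f ` ?S. g z = w}"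
    have "push G Z z0 W w0 g ?fu w = finprod G ?fu ?Zw"
      using push_eq_finprod[OF push_in_wedge[OF u, of Z z0 f] finite_imageI[OF S] push_support[OF u], of W w0 g w] True
      by simp
    also have "\<dots> = finprod G (\<lambda>z. finprod G u {y\<in>?S. f y = z}) ?Zw"
    proof (rule finprod_cong')
      fix z assume "z \<in> ?Zw"
      then have "z \<in> Z" "z \<noteq> z0" using f g True wedgeD(5)[OF u] by auto
      then show "?fu z = finprod G u {y\<in>?S. f y = z}"
        using push_eq_finprod[OF u S order_refl, of Z z0 f z] by simp
    qed (use wedgeD(1)[OF u] in auto)
    also have "\<dots> = finprod G u (\<Union>z\<in>?Zw. {y\<in>?S. f y = z})"
      by (rule finprod_UN_disjoint[symmetric])
        (use S wedgeD(1)[OF u] in \<open>auto simp: pairwise_def disjnt_def\<close>)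
    also have "(\<Union>z\<in>?Zw. {y\<in>?S. f y = z}) = {y\<in>?S. g (f y) = w}" by auto
    finally show ?thesis
      using push_eq_finprod[OF u S order_refl, of W w0 "\<lambda>y. g (f y)" w] True by simp
  qed (auto simp: push_def)
qed

lemma wedge_carrier_update:
  assumes "submonoid H G"
  shows "wedge (G\<lparr>carrier := H\<rparr>) Y y0 = {u \<in> wedge G Y y0. \<forall>y. u y \<in> H}"
  using submonoid.subset[OF assms] unfolding wedge_def by auto

lemma push_carrier_update:
  assumes "submonoid H G" "\<And>y. u y \<in> H"
  shows "push (G\<lparr>carrier := H\<rparr>) Y y0 Z z0 f u = push G Y y0 Z z0 f u"
proof -
  have "finprod (G\<lparr>carrier := H\<rparr>) u I = finprod G u I" for I
    by (rule finprod_carrier_update[OF assms(1)]) (use assms(2) in blast)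
  moreover have "\<one>\<^bsub>G\<lparr>carrier := H\<rparr>\<^esub> = \<one>" by simp
  ultimately show ?thesis unfolding push_def by (simp only:)
qed

lemma wedge_pointwise_root:
  assumes n: "n_divisible G n" and v: "v \<in> wedge G Y y0"
  shows "\<exists>r\<in>wedge G Y y0. {y. r y \<noteq> \<one>} \<subseteq> {y. v y \<noteq> \<one>} \<and> (\<lambda>y. r y [^] n) = v"
proof -
  have "\<exists>x\<in>carrier G. x [^] n = v y" for y
    using n wedgeD(1)[OF v] unfolding n_divisible_def by blast
  then obtain root where root: "\<And>y. root y \<in> carrier G \<and> root y [^] n = v y" by metis
  define r where "r y = (if v y = \<one> then \<one> else root y)" for y
  have S: "{y. r y \<noteq> \<one>} \<subseteq> {y. v y \<noteq> \<one>}" unfolding r_def by auto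
  have "r \<in> wedge G Y y0"
    using root wedgeD[OF v] finite_subset[OF S wedgeD(4)[OF v]] by (intro wedgeI) (auto simp: r_def)
  moreover have "(\<lambda>y. r y [^] n) = v" using root by (auto simp: r_def)
  ultimately show ?thesis using S by blast
qed

lemma push_lift:
  assumes v: "v \<in> wedge G Z z0" and onto: "{z. v z \<noteq> \<one>} \<subseteq> f ` Y'"
    and Y': "Y' \<subseteq> Y" and f: "f y0 = z0"
  shows "\<exists>u\<in>wedge G Y y0. push G Y y0 Z z0 f u = v \<and> {y. u y \<noteq> \<one>} \<subseteq> Y' \<and> range u \<subseteq> range v"
proof -
  obtain \<sigma> where \<sigma>: "\<And>z. v z \<noteq> \<one> \<Longrightarrow> \<sigma> z \<in> Y' \<and> f (\<sigma> z) = z"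
  proof -
    have "\<forall>z. v z \<noteq> \<one> \<longrightarrow> (\<exists>y. y \<in> Y' \<and> f y = z)" using onto by blast
    then show ?thesis using that by metis
  qed
  let ?S = "\<sigma> ` {z. v z \<noteq> \<one>}"
  define u where "u y = (if y \<in> ?S then v (f y) else \<one>)" for y
  have S: "v (f y) \<noteq> \<one> \<and> \<sigma> (f y) = y \<and> y \<in> Y' \<and> y \<noteq> y0" if "y \<in> ?S" for y
    using that \<sigma> f wedgeD(3)[OF v] by auto
  have finS: "finite ?S" using wedgeD(4)[OF v] by simp
  have suppS: "{y. u y \<noteq> \<one>} \<subseteq> ?S" unfolding u_def by auto
  have u: "u \<in> wedge G Y y0"
    using wedgeD(1)[OF v] finite_subset[OF suppS finS] S Y' by (intro wedgeI) (auto simp: u_def)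
  have fiber: "{y\<in>?S. f y = z} = (if v z = \<one> then {} else {\<sigma> z})" for z
    using S \<sigma> by auto
  have "push G Y y0 Z z0 f u z = v z" for z
  proof (cases "z \<in> Z \<and> z \<noteq> z0")
    case True
    have "finprod G u {y\<in>?S. f y = z} = v z"
    proof (cases "v z = \<one>")
      case False
      then have "u (\<sigma> z) = v z" using \<sigma> by (auto simp: u_def)
      then show ?thesis using False wedgeD(1)[OF v] by (simp add: fiber)
    qed (simp add: fiber)
    then show ?thesis using push_eq_finprod[OF u finS suppS, of Z z0 f z] True by simp
  next
    case False
    then show ?thesis using push_eq_finprod[OF u finS suppS, of Z z0 f z] wedgeD(2,3)[OF v] by auto
  qed
  moreover have "range u \<subseteq> range v" using wedgeD(3)[OF v] by (auto simp: u_def intro: range_eqI[of _ v z0])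
  ultimately show ?thesis using u suppS S by blast
qed

end

section \<open>The groups \<open>G(X,A)\<close> and \<open>K(X,A)\<close>\<close>

locale coefficient_diagram = comm_group A for A :: "('a, 'c) monoid_scheme" (structure) +
  fixes D :: "'t::order \<Rightarrow> 'x set" and bp :: "'t \<Rightarrow> 'x" and F :: "'t \<Rightarrow> 't \<Rightarrow> 'x \<Rightarrow> 'x"
  assumes diagram: "pointed_diagram D bp F"
begin

abbreviation "W t \<equiv> wedge A (D t) (bp t)"
abbreviation "pushF t s \<equiv> push A (D t) (bp t) (D s) (bp s) (F t s)"
abbreviation "GX \<equiv> G_grp D bp F A"
abbreviation "KX \<equiv> K_set D bp F A"

lemma F_in: "s \<le> t \<Longrightarrow> x \<in> D t \<Longrightarrow> F t s x \<in> D s"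
  using diagram unfolding pointed_diagram_def by (meson image_subset_iff)

lemma F_base: "s \<le> t \<Longrightarrow> F t s (bp t) = bp s"
  using diagram unfolding pointed_diagram_def by auto

lemma F_id: "x \<in> D t \<Longrightarrow> F t t x = x"
  using diagram unfolding pointed_diagram_def by auto

lemma F_trans: "r \<le> s \<Longrightarrow> s \<le> t \<Longrightarrow> x \<in> D t \<Longrightarrow> F s r (F t s x) = F t r x"
  using diagram unfolding pointed_diagram_def by auto

lemma pushF_trans:
  assumes "r \<le> s" "s \<le> t" "u \<in> W t"
  shows "pushF s r (pushF t s u) = pushF t r u"
proof -
  have "pushF s r (pushF t s u) = push A (D t) (bp t) (D r) (bp r) (\<lambda>y. F s r (F t s y)) u"
    by (rule push_comp) (use assms F_in F_base in auto)
  also have "\<dots> = pushF t r u"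
    by (rule push_cong) (use assms F_trans in auto)
  finally show ?thesis .
qed

lemma pushF_id:
  assumes "u \<in> W t"
  shows "pushF t t u = u"
proof -
  have "pushF t t u = push A (D t) (bp t) (D t) (bp t) (\<lambda>y. y) u"
    by (rule push_cong) (simp add: F_id)
  then show ?thesis using push_id[OF assms] by simp
qed

lemma G_carrier_iff:
  "g \<in> carrier GX \<longleftrightarrow> (\<forall>t. g t \<in> W t) \<and> (\<forall>t s. s \<le> t \<longrightarrow> pushF t s (g t) = g s)"
  unfolding G_grp_def G_carrier_def by simp

lemma G_carrierD:
  assumes "g \<in> carrier GX"
  shows "g t \<in> W t" "s \<le> t \<Longrightarrow> pushF t s (g t) = g s" "g t x \<in> carrier A"
  using assms unfolding G_carrier_iff by (auto intro: wedgeD(1))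

lemma G_mult [simp]: "g \<otimes>\<^bsub>GX\<^esub> h = (\<lambda>t x. g t x \<otimes> h t x)"
  and G_one [simp]: "\<one>\<^bsub>GX\<^esub> = (\<lambda>t x. \<one>)"
  unfolding G_grp_def by simp_all

lemma G_pow: "g [^]\<^bsub>GX\<^esub> (n::nat) = (\<lambda>t x. g t x [^] n)"
  by (induct n) simp_all

lemma G_carrier_hom:
  assumes g: "g \<in> carrier GX" and \<phi>: "\<phi> \<in> hom A A"
  shows "(\<lambda>t x. \<phi> (g t x)) \<in> carrier GX"
  unfolding G_carrier_iff
proof (intro conjI allI impI)
  note push_\<phi> = push_hom[OF G_carrierD(1)[OF g] \<phi> hom_one_self[OF \<phi>]]
  show "(\<lambda>x. \<phi> (g t x)) \<in> W t" for t by (rule push_\<phi>(1))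
  show "pushF t s (\<lambda>x. \<phi> (g t x)) = (\<lambda>x. \<phi> (g s x))" if "s \<le> t" for s t
    unfolding push_\<phi>(2) G_carrierD(2)[OF g that] ..
qed

lemma G_carrier_mult:
  assumes g: "g \<in> carrier GX" and h: "h \<in> carrier GX"
  shows "(\<lambda>t x. g t x \<otimes> h t x) \<in> carrier GX"
  unfolding G_carrier_iff
proof (intro conjI allI impI)
  note push_gh = push_mult[OF G_carrierD(1)[OF g] G_carrierD(1)[OF h]]
  show "(\<lambda>x. g t x \<otimes> h t x) \<in> W t" for t by (rule push_gh(1))
  show "pushF t s (\<lambda>x. g t x \<otimes> h t x) = (\<lambda>x. g s x \<otimes> h s x)" if "s \<le> t" for s t
    unfolding push_gh(2) G_carrierD(2)[OF g that] G_carrierD(2)[OF h that] ..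
qed

lemma G_carrier_one: "(\<lambda>t x. \<one>) \<in> carrier GX"
  unfolding G_carrier_iff by (simp add: one_in_wedge push_one)

lemma G_comm_group: "comm_group GX"
proof (rule comm_groupI)
  fix g h k assume g: "g \<in> carrier GX" and h: "h \<in> carrier GX" and k: "k \<in> carrier GX"
  show "g \<otimes>\<^bsub>GX\<^esub> h \<in> carrier GX" using G_carrier_mult[OF g h] by simp
  show "g \<otimes>\<^bsub>GX\<^esub> h \<otimes>\<^bsub>GX\<^esub> k = g \<otimes>\<^bsub>GX\<^esub> (h \<otimes>\<^bsub>GX\<^esub> k)"
    using G_carrierD(3)[OF g] G_carrierD(3)[OF h] G_carrierD(3)[OF k] by (simp add: m_assoc)
  show "g \<otimes>\<^bsub>GX\<^esub> h = h \<otimes>\<^bsub>GX\<^esub> g"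
    using G_carrierD(3)[OF g] G_carrierD(3)[OF h] by (simp add: m_comm)
  show "\<one>\<^bsub>GX\<^esub> \<otimes>\<^bsub>GX\<^esub> g = g" using G_carrierD(3)[OF g] by simp
  show "\<exists>h\<in>carrier GX. h \<otimes>\<^bsub>GX\<^esub> g = \<one>\<^bsub>GX\<^esub>"
    using G_carrier_hom[OF g inv_hom] G_carrierD(3)[OF g] by (intro bexI[of _ "\<lambda>t x. inv (g t x)"]) simp_all
next
  show "\<one>\<^bsub>GX\<^esub> \<in> carrier GX" using G_carrier_one by simp
qed

lemma G_inv:
  assumes "g \<in> carrier GX"
  shows "inv\<^bsub>GX\<^esub> g = (\<lambda>t x. inv (g t x))"
  using assms G_carrier_hom[OF assms inv_hom] G_carrierD(3)[OF assms]
  by (intro group.inv_equality[OF comm_group.axioms(2)[OF G_comm_group]]) simp_all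

lemma G_carrier_eq_cofinal:
  assumes "g \<in> carrier GX" "h \<in> carrier GX" and cofinal: "\<And>t. \<exists>s\<ge>t. g s = h s"
  shows "g = h"
proof
  fix t
  obtain s where "t \<le> s" "g s = h s" using cofinal by blast
  then show "g t = h t" using G_carrierD(2)[OF assms(1)] G_carrierD(2)[OF assms(2)] by metis
qed

lemma G_bounded:
  assumes "bounded_grp A"
  shows "bounded_grp GX"
proof -
  obtain n :: nat where "n > 0" and n: "\<And>a. a \<in> carrier A \<Longrightarrow> a [^] n = \<one>"
    using assms unfolding bounded_grp_def by blast
  then show ?thesis
    unfolding bounded_grp_def G_pow using G_carrierD(3) by auto
qed

abbreviation "WL \<equiv> wedge A (limX D F) bp"

lemma rho_eq: "rho D bp F A u t = push A (limX D F) bp (D t) (bp t) (\<lambda>x. x t) u"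
  unfolding rho_def ..

lemma rho_in_G:
  assumes u: "u \<in> WL"
  shows "rho D bp F A u \<in> carrier GX"
  unfolding G_carrier_iff rho_eq
proof (intro conjI allI impI)
  show "push A (limX D F) bp (D t) (bp t) (\<lambda>x. x t) u \<in> W t" for t
    by (rule push_in_wedge[OF u])
  fix t s :: 't assume st: "s \<le> t"
  have "pushF t s (push A (limX D F) bp (D t) (bp t) (\<lambda>x. x t) u)
      = push A (limX D F) bp (D s) (bp s) (\<lambda>x. F t s (x t)) u"
    by (rule push_comp[OF u]) (use F_base[OF st] in \<open>auto simp: limX_def\<close>)
  also have "\<dots> = push A (limX D F) bp (D s) (bp s) (\<lambda>x. x s) u"
    by (rule push_cong) (use st in \<open>simp add: limX_def\<close>)
  finally show "pushF t s (push A (limX D F) bp (D t) (bp t) (\<lambda>x. x t) u)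
      = push A (limX D F) bp (D s) (bp s) (\<lambda>x. x s) u" .
qed

lemma K_subset_G: "KX \<subseteq> carrier GX"
  unfolding K_set_def using rho_in_G by blast

lemma K_hom:
  assumes k: "k \<in> KX" and \<phi>: "\<phi> \<in> hom A A"
  shows "(\<lambda>t x. \<phi> (k t x)) \<in> KX"
proof -
  obtain u where u: "u \<in> WL" "k = rho D bp F A u" using k unfolding K_set_def by blast
  note push_\<phi> = push_hom[OF u(1) \<phi> hom_one_self[OF \<phi>]]
  have "(\<lambda>t x. \<phi> (k t x)) = rho D bp F A (\<lambda>y. \<phi> (u y))"
    unfolding u(2) rho_def push_\<phi>(2) ..
  then show ?thesis unfolding K_set_def using push_\<phi>(1) by blast
qed

lemma K_mult:
  assumes "k \<in> KX" "l \<in> KX"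
  shows "(\<lambda>t x. k t x \<otimes> l t x) \<in> KX"
proof -
  obtain u v where u: "u \<in> WL" "k = rho D bp F A u" and v: "v \<in> WL" "l = rho D bp F A v"
    using assms unfolding K_set_def by blast
  note push_uv = push_mult[OF u(1) v(1)]
  have "(\<lambda>t x. k t x \<otimes> l t x) = rho D bp F A (\<lambda>y. u y \<otimes> v y)"
    unfolding u(2) v(2) rho_def push_uv(2) ..
  then show ?thesis unfolding K_set_def using push_uv(1) by blast
qed

lemma K_subgroup: "subgroup KX GX"
proof (rule group.subgroupI[OF comm_group.axioms(2)[OF G_comm_group] K_subset_G])
  show "KX \<noteq> {}" unfolding K_set_def using one_in_wedge[of "limX D F" bp] by auto
  show "inv\<^bsub>GX\<^esub> k \<in> KX" if "k \<in> KX" for k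
    using G_inv K_hom[OF that inv_hom] K_subset_G that by auto
  show "k \<otimes>\<^bsub>GX\<^esub> l \<in> KX" if "k \<in> KX" "l \<in> KX" for k l
    using K_mult[OF that] by simp
qed

lemma H_n_divisible: "n_divisible GX n \<Longrightarrow> n_divisible (H_grp D bp F A) n"
  unfolding H_grp_def
  by (rule normal.n_divisible_FactGroup[OF comm_group.subgroup_imp_normal[OF G_comm_group K_subgroup]])

lemma G_carrier_carrier_update:
  assumes "subgroup H A"
  shows "G_carrier D bp F (A\<lparr>carrier := H\<rparr>) = {g \<in> carrier GX. \<forall>t x. g t x \<in> H}"
proof -
  note H = subgroup_is_submonoid[OF assms]
  have "g \<in> G_carrier D bp F (A\<lparr>carrier := H\<rparr>) \<longleftrightarrow> g \<in> carrier GX \<and> (\<forall>t x. g t x \<in> H)" for g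
  proof -
    have "push (A\<lparr>carrier := H\<rparr>) (D t) (bp t) (D s) (bp s) (F t s) (g t) = pushF t s (g t)"
      if "\<forall>t x. g t x \<in> H" for t s
      by (rule push_carrier_update[OF H]) (use that in blast)
    then show ?thesis
      unfolding G_carrier_def G_carrier_iff wedge_carrier_update[OF H] by auto
  qed
  then show ?thesis by blast
qed

lemma G_grp_carrier_update:
  assumes H: "subgroup H A"
  shows "G_grp D bp F (A\<lparr>carrier := H\<rparr>) = GX\<lparr>carrier := G_carrier D bp F (A\<lparr>carrier := H\<rparr>)\<rparr>"
    and "subgroup (G_carrier D bp F (A\<lparr>carrier := H\<rparr>)) GX"
proof -
  show eq: "G_grp D bp F (A\<lparr>carrier := H\<rparr>) = GX\<lparr>carrier := G_carrier D bp F (A\<lparr>carrier := H\<rparr>)\<rparr>"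
    unfolding G_grp_def by simp
  interpret AH: coefficient_diagram "A\<lparr>carrier := H\<rparr>" D bp F
    by (intro coefficient_diagram.intro coefficient_diagram_axioms.intro subgroup_is_comm_group H diagram)
  show "subgroup (G_carrier D bp F (A\<lparr>carrier := H\<rparr>)) GX"
    using group.group_incl_imp_subgroup[OF comm_group.axioms(2)[OF G_comm_group]]
      comm_group.axioms(2)[OF AH.G_comm_group] G_carrier_carrier_update[OF H] eq
    by auto
qed

lemma pushF_chain:
  assumes mono: "mono \<tau>" and h: "\<And>k. h k \<in> W (\<tau> k)"
    and compat: "\<And>k. pushF (\<tau> (Suc k)) (\<tau> k) (h (Suc k)) = h k"
    and "m \<le> k"
  shows "pushF (\<tau> k) (\<tau> m) (h k) = h m"
  using \<open>m \<le> k\<close>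
proof (induct k rule: dec_induct)
  case base
  show ?case by (rule pushF_id[OF h])
next
  case (step k)
  have "pushF (\<tau> (Suc k)) (\<tau> m) (h (Suc k)) = pushF (\<tau> k) (\<tau> m) (pushF (\<tau> (Suc k)) (\<tau> k) (h (Suc k)))"
    using mono step(1) h by (simp add: pushF_trans monoD)
  then show ?case using step(3) compat by simp
qed

lemma chain_limit:
  assumes mono: "mono \<tau>" and cofinal: "\<And>t. \<exists>k. t \<le> \<tau> k"
    and h: "\<And>k. h k \<in> W (\<tau> k)" and compat: "\<And>k. pushF (\<tau> (Suc k)) (\<tau> k) (h (Suc k)) = h k"
  shows "\<exists>g\<in>carrier GX. \<forall>k. g (\<tau> k) = h k"
proof -
  define k where "k t = (LEAST k. t \<le> \<tau> k)" for t
  define g where "g t = pushF (\<tau> (k t)) t (h (k t))" for t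
  have g_eq: "g t = pushF (\<tau> j) t (h j)" if "t \<le> \<tau> j" for t j
  proof -
    have "k t \<le> j" "t \<le> \<tau> (k t)"
      unfolding k_def using that cofinal by (auto intro: Least_le LeastI_ex)
    then have "pushF (\<tau> j) t (h j) = pushF (\<tau> (k t)) t (pushF (\<tau> j) (\<tau> (k t)) (h j))"
      using mono h by (simp add: pushF_trans monoD)
    then show ?thesis unfolding g_def using pushF_chain[OF mono h compat \<open>k t \<le> j\<close>] by simp
  qed
  have "g \<in> carrier GX"
    unfolding G_carrier_iff
  proof (intro conjI allI impI)
    show "g t \<in> W t" for t unfolding g_def by (rule push_in_wedge[OF h])
    fix t s :: 't assume "s \<le> t"
    obtain j where "t \<le> \<tau> j" using cofinal by blast
    then show "pushF t s (g t) = g s"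
      using \<open>s \<le> t\<close> g_eq order_trans pushF_trans[OF _ _ h] by metis
  qed
  moreover have "g (\<tau> j) = h j" for j using g_eq[OF order_refl] pushF_id[OF h] by simp
  ultimately show ?thesis by blast
qed

definition stable_image :: "'t \<Rightarrow> 'x set" where
  "stable_image t = (\<Inter>s\<in>{s. t \<le> s}. F s t ` D s)"

lemma image_F_antimono:
  assumes "t \<le> s" "s \<le> r"
  shows "F r t ` D r \<subseteq> F s t ` D s"
  using assms F_trans F_in by (auto intro!: image_eqI[of _ "F s t", OF sym])

lemma stable_image_subset: "stable_image t \<subseteq> D t"
  unfolding stable_image_def using F_in by blast

lemma G_support_stable:
  assumes "g \<in> carrier GX"
  shows "{x. g t x \<noteq> \<one>} \<subseteq> stable_image t"
  unfolding stable_image_def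
proof (intro INT_greatest)
  fix s assume "s \<in> {s. t \<le> s}"
  then have "g t = pushF s t (g s)" using G_carrierD(2)[OF assms] by simp
  then have "{x. g t x \<noteq> \<one>} \<subseteq> F s t ` {y. g s y \<noteq> \<one>}"
    using push_support[OF G_carrierD(1)[OF assms, of s], of "D t" "bp t" "F s t"] by simp
  also have "\<dots> \<subseteq> F s t ` D s" using wedgeD(5)[OF G_carrierD(1)[OF assms]] by blast
  finally show "{x. g t x \<noteq> \<one>} \<subseteq> F s t ` D s" .
qed

end

section \<open>Lifting roots under the Mittag-Leffler condition\<close>

lemma countable_directed_cofinal_chain:
  assumes "countable (UNIV :: 't::order set)" and "directed_poset TYPE('t::order)"
  obtains \<tau> :: "nat \<Rightarrow> 't::order" where "mono \<tau>" and "\<And>t. \<exists>k. t \<le> \<tau> k"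
proof -
  let ?e = "from_nat_into (UNIV :: 't set)"
  have "\<exists>\<tau>. \<forall>k. ?e k \<le> \<tau> k \<and> \<tau> k \<le> \<tau> (Suc k)"
    by (rule dependent_nat_choice) (use assms(2) in \<open>auto simp: directed_poset_def\<close>)
  then obtain \<tau> where \<tau>: "\<And>k. ?e k \<le> \<tau> k" "\<And>k. \<tau> k \<le> \<tau> (Suc k)" by blast
  have "\<exists>k. t \<le> \<tau> k" for t
    using from_nat_into_surj[OF assms(1) UNIV_I, of t] \<tau>(1) by metis
  moreover have "mono \<tau>" using \<tau>(2) by (simp add: mono_iff_le_Suc)
  ultimately show ?thesis using that by blast
qed

locale ml_diagram = coefficient_diagram A D bp F
  for A :: "('a, 'c) monoid_scheme" (structure) and D :: "'t::order \<Rightarrow> 'x set" and bp F +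
  assumes countable: "countable (UNIV :: 't set)"
    and directed: "directed_poset TYPE('t::order)"
    and ml: "mittag_leffler D F"
begin

lemma stable_image_eq: "\<exists>s\<ge>t. \<forall>r\<ge>s. stable_image t = F r t ` D r"
proof -
  obtain s where s: "t \<le> s" "\<And>r. s \<le> r \<Longrightarrow> F s t ` D s = F r t ` D r"
    using ml unfolding mittag_leffler_def by blast
  have "stable_image t = F s t ` D s"
  proof
    show "stable_image t \<subseteq> F s t ` D s" unfolding stable_image_def using s(1) by blast
    have "F s t ` D s \<subseteq> F s' t ` D s'" if "t \<le> s'" for s'
    proof -
      obtain r where "s \<le> r" "s' \<le> r" using directed unfolding directed_poset_def by blast
      then show ?thesis using s(2) image_F_antimono[OF that] by simp
    qed
    then show "F s t ` D s \<subseteq> stable_image t" unfolding stable_image_def by blast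
  qed
  with s show ?thesis by auto
qed

lemma stable_image_surj:
  assumes "t \<le> t'"
  shows "F t' t ` stable_image t' = stable_image t"
proof -
  obtain s where s: "t \<le> s" "\<And>r. s \<le> r \<Longrightarrow> stable_image t = F r t ` D r"
    using stable_image_eq[of t] by blast
  obtain s' where s': "t' \<le> s'" "\<And>r. s' \<le> r \<Longrightarrow> stable_image t' = F r t' ` D r"
    using stable_image_eq[of t'] by blast
  obtain r where r: "s \<le> r" "s' \<le> r" using directed unfolding directed_poset_def by blast
  have "t' \<le> r" using s'(1) r(2) by simp
  have "F t' t ` stable_image t' = (\<lambda>x. F t' t (F r t' x)) ` D r"
    unfolding s'(2)[OF r(2)] image_image ..
  also have "\<dots> = F r t ` D r" using F_trans[OF assms \<open>t' \<le> r\<close>] by (simp cong: image_cong)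
  finally show ?thesis using s(2)[OF r(1)] by simp
qed

definition stable_root :: "nat \<Rightarrow> ('t \<Rightarrow> 'x \<Rightarrow> 'a) \<Rightarrow> 't \<Rightarrow> ('x \<Rightarrow> 'a) \<Rightarrow> bool" where
  "stable_root n g t h \<longleftrightarrow> h \<in> W t \<and> {x. h x \<noteq> \<one>} \<subseteq> stable_image t \<and> (\<lambda>x. h x [^] n) = g t"

lemma stable_root_exists:
  assumes "n_divisible A n" and "g \<in> carrier GX"
  shows "\<exists>h. stable_root n g t h"
  using wedge_pointwise_root[OF assms(1) G_carrierD(1)[OF assms(2)]] G_support_stable[OF assms(2)]
  unfolding stable_root_def by blast

lemma stable_root_push:
  assumes g: "g \<in> carrier GX" and tt: "t \<le> t'" and r: "stable_root n g t' r"
  shows "stable_root n g t (pushF t' t r)"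
proof -
  have rW: "r \<in> W t'" and r_supp: "{x. r x \<noteq> \<one>} \<subseteq> stable_image t'"
    and r_pow: "(\<lambda>x. r x [^] n) = g t'"
    using r unfolding stable_root_def by blast+
  have "(\<lambda>x. pushF t' t r x [^] n) = pushF t' t (\<lambda>y. r y [^] n)"
    by (rule sym, rule push_hom(2)[OF rW nat_pow_hom]) simp
  also have "\<dots> = g t" unfolding r_pow by (rule G_carrierD(2)[OF g tt])
  finally have "(\<lambda>x. pushF t' t r x [^] n) = g t" .
  moreover have "{x. pushF t' t r x \<noteq> \<one>} \<subseteq> stable_image t"
    using push_support[OF rW, of "D t" "bp t" "F t' t"] r_supp stable_image_surj[OF tt] by blast
  ultimately show ?thesis
    unfolding stable_root_def using push_in_wedge[OF rW, of "D t" "bp t" "F t' t"] by blast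
qed

lemma stable_root_defect:
  assumes g: "g \<in> carrier GX" and h: "stable_root n g t h" and p: "stable_root n g t p"
  shows "(\<lambda>x. h x \<otimes> inv (p x)) \<in> W t"
    and "{x. h x \<otimes> inv (p x) \<noteq> \<one>} \<subseteq> stable_image t"
    and "(h x \<otimes> inv (p x)) [^] n = \<one>"
proof -
  have hW: "h \<in> W t" and pW: "p \<in> W t" using h p unfolding stable_root_def by blast+
  show "(\<lambda>x. h x \<otimes> inv (p x)) \<in> W t"
    by (rule push_mult(1)[OF hW push_hom(1)[OF pW inv_hom]]) simp
  have "{x. h x \<otimes> inv (p x) \<noteq> \<one>} \<subseteq> {x. h x \<noteq> \<one>} \<union> {x. p x \<noteq> \<one>}" by auto
  then show "{x. h x \<otimes> inv (p x) \<noteq> \<one>} \<subseteq> stable_image t"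
    using h p unfolding stable_root_def by blast
  have "h x [^] n = g t x" "p x [^] n = g t x"
    using h p unfolding stable_root_def by (auto dest: fun_cong)
  then show "(h x \<otimes> inv (p x)) [^] n = \<one>"
    using wedgeD(1)[OF hW] wedgeD(1)[OF pW] G_carrierD(3)[OF g] by (simp add: nat_pow_distrib nat_pow_inv)
qed

lemma stable_root_mult_torsion:
  assumes g: "g \<in> carrier GX" and r: "stable_root n g t r"
    and e: "e \<in> W t" "{y. e y \<noteq> \<one>} \<subseteq> stable_image t" "\<And>y. e y [^] n = \<one>"
  shows "stable_root n g t (\<lambda>y. r y \<otimes> e y)"
proof -
  have rW: "r \<in> W t" using r unfolding stable_root_def by blast
  have "r y [^] n = g t y" for y using r unfolding stable_root_def by (auto dest: fun_cong)
  then have "(\<lambda>y. (r y \<otimes> e y) [^] n) = g t"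
    using e(3) wedgeD(1)[OF rW] wedgeD(1)[OF e(1)] G_carrierD(3)[OF g] by (simp add: nat_pow_distrib)
  moreover have "{y. r y \<otimes> e y \<noteq> \<one>} \<subseteq> {y. r y \<noteq> \<one>} \<union> {y. e y \<noteq> \<one>}" by auto
  ultimately show ?thesis
    using push_mult(1)[OF rW e(1)] r e(2) unfolding stable_root_def by blast
qed

lemma stable_root_extend:
  assumes n: "n_divisible A n" and g: "g \<in> carrier GX" and tt: "t \<le> t'"
    and h: "stable_root n g t h"
  shows "\<exists>h'. stable_root n g t' h' \<and> pushF t' t h' = h"
proof -
  obtain r where r: "stable_root n g t' r" using stable_root_exists[OF n g] by blast
  define p where "p = pushF t' t r"
  have p: "stable_root n g t p" unfolding p_def by (rule stable_root_push[OF g tt r])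
  note d = stable_root_defect[OF g h p]
  obtain e where eW: "e \<in> W t'" and e_push: "pushF t' t e = (\<lambda>x. h x \<otimes> inv (p x))"
    and e_supp: "{y. e y \<noteq> \<one>} \<subseteq> stable_image t'" and e_range: "range e \<subseteq> range (\<lambda>x. h x \<otimes> inv (p x))"
    using push_lift[OF d(1), of "F t' t" "stable_image t'" "D t'"] d(2) stable_image_surj[OF tt]
      stable_image_subset F_base[OF tt] by blast
  have "e y [^] n = \<one>" for y
  proof -
    obtain x where "e y = h x \<otimes> inv (p x)" using e_range by blast
    then show ?thesis using d(3) by simp
  qed
  then have "stable_root n g t' (\<lambda>y. r y \<otimes> e y)"
    by (rule stable_root_mult_torsion[OF g r eW e_supp])
  moreover have "pushF t' t (\<lambda>y. r y \<otimes> e y) = h"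
  proof
    have rW: "r \<in> W t'" and hW: "h \<in> W t" and pW: "p \<in> W t"
      using r h p unfolding stable_root_def by blast+
    fix x
    have "pushF t' t (\<lambda>y. r y \<otimes> e y) x = p x \<otimes> (h x \<otimes> inv (p x))"
      unfolding push_mult(2)[OF rW eW] e_push p_def ..
    then show "pushF t' t (\<lambda>y. r y \<otimes> e y) x = h x"
      using wedgeD(1)[OF hW] wedgeD(1)[OF pW] by (simp add: m_lcomm)
  qed
  ultimately show ?thesis by blast
qed

theorem G_n_divisible:
  assumes n: "n_divisible A n"
  shows "n_divisible GX n"
  unfolding n_divisible_def
proof
  fix g assume g: "g \<in> carrier GX"
  obtain \<tau> :: "nat \<Rightarrow> 't" where mono: "mono \<tau>" and cofinal: "\<And>t. \<exists>k. t \<le> \<tau> k"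
    using countable_directed_cofinal_chain[OF countable directed] by blast
  have "\<exists>hs. \<forall>k. stable_root n g (\<tau> k) (hs k) \<and> pushF (\<tau> (Suc k)) (\<tau> k) (hs (Suc k)) = hs k"
    by (rule dependent_nat_choice)
      (use stable_root_exists[OF n g] stable_root_extend[OF n g] mono[THEN monoD] in auto)
  then obtain hs where hs: "\<And>k. stable_root n g (\<tau> k) (hs k)"
    and compat: "\<And>k. pushF (\<tau> (Suc k)) (\<tau> k) (hs (Suc k)) = hs k" by blast
  obtain f where f: "f \<in> carrier GX" and f_chain: "\<And>k. f (\<tau> k) = hs k"
    using chain_limit[OF mono cofinal _ compat] hs unfolding stable_root_def by blast
  have "f [^]\<^bsub>GX\<^esub> n = g"
  proof (rule G_carrier_eq_cofinal)
    show "f [^]\<^bsub>GX\<^esub> n \<in> carrier GX"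
      using f by (simp add: comm_group.axioms(2)[OF G_comm_group] group.is_monoid monoid.nat_pow_closed)
    show "\<exists>s\<ge>t. (f [^]\<^bsub>GX\<^esub> n) s = g s" for t
      using cofinal[of t] hs f_chain unfolding G_pow stable_root_def by metis
  qed (rule g)
  then show "\<exists>h\<in>carrier GX. h [^]\<^bsub>GX\<^esub> n = g" using f by blast
qed

end

section \<open>Almost divisibility\<close>

locale split_coefficient_diagram = coefficient_diagram A D bp F + internal_direct_sum A U V
  for A :: "('a, 'c) monoid_scheme" (structure) and D :: "'t::order \<Rightarrow> 'x set" and bp F U V
begin

abbreviation "GU \<equiv> G_carrier D bp F (A\<lparr>carrier := U\<rparr>)"
abbreviation "GV \<equiv> G_carrier D bp F (A\<lparr>carrier := V\<rparr>)"

lemma G_split: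
  assumes g: "g \<in> carrier GX"
  shows "g \<otimes>\<^bsub>GX\<^esub> inv\<^bsub>GX\<^esub> (\<lambda>t x. proj (g t x)) \<in> GU" and "(\<lambda>t x. proj (g t x)) \<in> GV"
    and "(g \<otimes>\<^bsub>GX\<^esub> inv\<^bsub>GX\<^esub> (\<lambda>t x. proj (g t x))) \<otimes>\<^bsub>GX\<^esub> (\<lambda>t x. proj (g t x)) = g"
proof -
  have pg: "(\<lambda>t x. proj (g t x)) \<in> carrier GX" by (rule G_carrier_hom[OF g proj_hom])
  have vals: "proj (g t x) \<in> V" "g t x \<otimes> inv proj (g t x) \<in> U" for t x
    using proj G_carrierD(3)[OF g] by blast+
  have carr: "g t x \<in> carrier A" "proj (g t x) \<in> carrier A" for t x
    using G_carrierD(3)[OF g] G_carrierD(3)[OF pg] by simp_all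
  show "g \<otimes>\<^bsub>GX\<^esub> inv\<^bsub>GX\<^esub> (\<lambda>t x. proj (g t x)) \<in> GU"
    unfolding G_carrier_carrier_update[OF U] G_inv[OF pg]
    using G_carrier_mult[OF g G_carrier_hom[OF pg inv_hom]] vals by simp
  show "(\<lambda>t x. proj (g t x)) \<in> GV" unfolding G_carrier_carrier_update[OF V] using pg vals by simp
  show "(g \<otimes>\<^bsub>GX\<^esub> inv\<^bsub>GX\<^esub> (\<lambda>t x. proj (g t x))) \<otimes>\<^bsub>GX\<^esub> (\<lambda>t x. proj (g t x)) = g"
    unfolding G_inv[OF pg] using carr by (simp add: m_assoc)
qed

lemma G_internal_direct_sum: "internal_direct_sum GX GU GV"
proof (intro internal_direct_sum.intro internal_direct_sum_axioms.intro G_comm_group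
    G_grp_carrier_update(2)[OF U] G_grp_carrier_update(2)[OF V])
  show "GU \<inter> GV = {\<one>\<^bsub>GX\<^esub>}"
  proof
    show "GU \<inter> GV \<subseteq> {\<one>\<^bsub>GX\<^esub>}"
    proof
      fix g assume "g \<in> GU \<inter> GV"
      then have "g t x \<in> U \<inter> V" for t x
        unfolding G_carrier_carrier_update[OF U] G_carrier_carrier_update[OF V] by blast
      then have "g = (\<lambda>t x. \<one>)" using inter by (intro ext) blast
      then show "g \<in> {\<one>\<^bsub>GX\<^esub>}" by simp
    qed
    show "{\<one>\<^bsub>GX\<^esub>} \<subseteq> GU \<inter> GV"
      using subgroup.one_closed[OF G_grp_carrier_update(2)[OF U]]
        subgroup.one_closed[OF G_grp_carrier_update(2)[OF V]] by blast
  qed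
  show "GU <#>\<^bsub>GX\<^esub> GV = carrier GX"
  proof
    show "GU <#>\<^bsub>GX\<^esub> GV \<subseteq> carrier GX"
      using G_grp_carrier_update(2)[OF U] G_grp_carrier_update(2)[OF V]
      by (simp add: comm_group.axioms(2)[OF G_comm_group] group.is_monoid monoid.set_mult_closed subgroup.subset)
    show "carrier GX \<subseteq> GU <#>\<^bsub>GX\<^esub> GV"
    proof
      fix g assume "g \<in> carrier GX"
      from G_split[OF this] show "g \<in> GU <#>\<^bsub>GX\<^esub> GV"
        unfolding set_mult_def by (metis (no_types, lifting) UN_iff singletonI)
    qed
  qed
qed

lemma K_split: "KX \<subseteq> (KX \<inter> GU) <#>\<^bsub>GX\<^esub> (KX \<inter> GV)"
proof
  fix k assume k: "k \<in> KX"
  have pk: "(\<lambda>t x. proj (k t x)) \<in> KX" by (rule K_hom[OF k proj_hom])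
  then have "k \<otimes>\<^bsub>GX\<^esub> inv\<^bsub>GX\<^esub> (\<lambda>t x. proj (k t x)) \<in> KX"
    by (intro subgroup.m_closed[OF K_subgroup k] subgroup.m_inv_closed[OF K_subgroup])
  with pk show "k \<in> (KX \<inter> GU) <#>\<^bsub>GX\<^esub> (KX \<inter> GV)"
    using G_split[of k] k K_subset_G unfolding set_mult_def by blast
qed

end

context ml_diagram
begin

theorem G_H_almost_divisible:
  assumes "almost_divisible A"
  shows "almost_divisible GX" and "almost_divisible (H_grp D bp F A)"
proof -
  obtain U V where U: "subgroup U A" and V: "subgroup V A"
    and div: "divisible_grp (A\<lparr>carrier := U\<rparr>)" and bnd: "bounded_grp (A\<lparr>carrier := V\<rparr>)"
    and inter: "U \<inter> V = {\<one>}" and sum: "U <#> V = carrier A"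
    using assms unfolding almost_divisible_def by blast
  interpret S: split_coefficient_diagram A D bp F U V
    by (intro split_coefficient_diagram.intro internal_direct_sum_axioms.intro coefficient_diagram_axioms
        internal_direct_sum.intro comm_group_axioms U V inter sum)
  interpret AU: ml_diagram "A\<lparr>carrier := U\<rparr>" D bp F
    by (intro ml_diagram.intro ml_diagram_axioms.intro coefficient_diagram.intro coefficient_diagram_axioms.intro
        subgroup_is_comm_group U diagram countable directed ml)
  interpret AV: coefficient_diagram "A\<lparr>carrier := V\<rparr>" D bp F
    by (intro coefficient_diagram.intro coefficient_diagram_axioms.intro subgroup_is_comm_group V diagram)
  interpret G_sum: internal_direct_sum GX "G_carrier D bp F (A\<lparr>carrier := U\<rparr>)"
      "G_carrier D bp F (A\<lparr>carrier := V\<rparr>)"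
    by (rule S.G_internal_direct_sum)
  have div_GU: "divisible_grp (GX\<lparr>carrier := G_carrier D bp F (A\<lparr>carrier := U\<rparr>)\<rparr>)"
    using AU.G_n_divisible div unfolding divisible_grp_def G_grp_carrier_update(1)[OF U, symmetric]
    by blast
  have bnd_GV: "bounded_grp (GX\<lparr>carrier := G_carrier D bp F (A\<lparr>carrier := V\<rparr>)\<rparr>)"
    using AV.G_bounded[OF bnd] unfolding G_grp_carrier_update(1)[OF V] .
  show "almost_divisible GX" by (rule G_sum.almost_divisibleI[OF div_GU bnd_GV])
  show "almost_divisible (H_grp D bp F A)"
    unfolding H_grp_def by (rule G_sum.almost_divisible_FactGroup[OF div_GU bnd_GV K_subgroup S.K_split])
qed

end

theorem mainTheorem14:
  fixes D :: "'t::order \<Rightarrow> 'x set" and bp :: "'t \<Rightarrow> 'x" and F :: "'t \<Rightarrow> 't \<Rightarrow> 'x \<Rightarrow> 'x"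
    and A :: "('a, 'c) monoid_scheme"
  assumes "countable (UNIV :: 't set)"
    and "directed_poset TYPE('t)"
    and "pointed_diagram D bp F"
    and "mittag_leffler D F"
    and "comm_group A"
  shows "(\<forall>p::nat. Factorial_Ring.prime p \<and> n_divisible A p \<longrightarrow>
            n_divisible (G_grp D bp F A) p \<and> n_divisible (H_grp D bp F A) p)
       \<and> (divisible_grp A \<longrightarrow>
            divisible_grp (G_grp D bp F A) \<and> divisible_grp (H_grp D bp F A))
       \<and> (almost_divisible A \<longrightarrow>
            almost_divisible (G_grp D bp F A) \<and> almost_divisible (H_grp D bp F A))"
proof -
  interpret ml_diagram A D bp F
    by (intro ml_diagram.intro ml_diagram_axioms.intro coefficient_diagram.intro
        coefficient_diagram_axioms.intro assms)
  have "n_divisible A n \<Longrightarrow> n_divisible (G_grp D bp F A) n \<and> n_divisible (H_grp D bp F A) n" for n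
    using G_n_divisible H_n_divisible by blast
  then show ?thesis using G_H_almost_divisible unfolding divisible_grp_def by blast
qed

end
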